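(* Let $\mathfrak{g}$ be a finite-dimensional complex Lie algebra and let $a\in\mathfrak{g}^*$ be regular. Then the algebra of shifts of semi-invariants $\mathcal{F}^{\mathrm{si}}_a$ is commutative with respect to both the Lie–Poisson bracket $\{\cdot,\cdot\}$ and the frozen argument bracket $\{\cdot,\cdot\}_a$.
   Context: $S(\mathfrak{g})$ is identified with polynomial functions on $\mathfrak{g}^*$; $df(x)\in\mathfrak{g}\simeq T^*_x\mathfrak{g}^*$. Lie–Poisson bracket: $\{f,h\}(x)=\langle x,[df(x),dh(x)]\rangle$; frozen argument bracket: $\{f,h\}_a(x)=\langle a,[df(x),dh(x)]\rangle$. $\mathfrak{g}_x=\{\xi\in\mathfrak{g}\mid \operatorname{ad}^*_\xi x=0\}$, $\operatorname{ind}\mathfrak{g}=\min_x\dim\mathfrak{g}_x$, $a$ regular means $\dim\mathfrak{g}_a=\operatorname{ind}\mathfrak{g}$. Algebra of shifts $\mathcal{F}_a$: choose $m=\operatorname{ind}\mathfrak{g}$ local analytic invariants $f_1,\dots,f_m$ of the coadjoint representation near $a$ with $df_i(a)$ a basis of $\mathfrak{g}_a$; expand $f_i(a+\lambda x)=\sum_{j\ge0}f_{ij}(x)\lambda^j$; $\mathcal{F}_a$ is generated by all $f_{ij}$, $j>0$. A nonzero $g\in S(\mathfrak{g})$ is a semi-invariant with weight $\chi_g\in\mathfrak{g}^*$ if $\{f,g\}(x)=\chi_g(df(x))g(x)$ for all $f\in S(\mathfrak{g})$. $\mathcal{F}^{\mathrm{si}}_a$ is the subalgebra of $S(\mathfrak{g})$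 generated by $\mathcal{F}_a$ and all functions $x\mapsto g(x+\lambda a)$ for all semi-invariants $g$ and all $\lambda\in\mathbb{C}$. *)

theory Defs
  imports "HOL-Analysis.Analysis"
begin

text \<open>A finite-dimensional complex Lie algebra is modelled as complex^'n with a
bracket; its dual g^* is identified with complex^'n via the coordinate pairing.\<close>

definition pair :: "complex^'n \<Rightarrow> complex^'n \<Rightarrow> complex" where
  "pair x \<xi> = (\<Sum>i\<in>UNIV. x$i * \<xi>$i)"

definition lie_algebra :: "(complex^'n \<Rightarrow> complex^'n \<Rightarrow> complex^'n) \<Rightarrow> bool" where
  "lie_algebra br \<longleftrightarrow>
     (\<forall>x y z. br (x + y) z = br x z + br y z) \<and>
     (\<forall>c x y. br (c *s x) y = c *s br x y) \<and>
     (\<forall>x y. br x y = - br y x) \<and>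
     (\<forall>x y z. br x (br y z) + br y (br z x) + br z (br x y) = 0)"

definition stab :: "(complex^'n \<Rightarrow> complex^'n \<Rightarrow> complex^'n) \<Rightarrow> complex^'n \<Rightarrow> (complex^'n) set" where
  "stab br x = {\<xi>. \<forall>\<eta>. pair x (br \<xi> \<eta>) = 0}"

definition lie_index :: "(complex^'n \<Rightarrow> complex^'n \<Rightarrow> complex^'n) \<Rightarrow> nat" where
  "lie_index br = (LEAST d. \<exists>x. vec.dim (stab br x) = d)"

definition regular :: "(complex^'n \<Rightarrow> complex^'n \<Rightarrow> complex^'n) \<Rightarrow> complex^'n \<Rightarrow> bool" where
  "regular br a \<longleftrightarrow> vec.dim (stab br a) = lie_index br"

definition dF :: "(complex^'n \<Rightarrow> complex) \<Rightarrow> complex^'n \<Rightarrow> complex^'n" where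
  "dF f x = (\<chi> i. frechet_derivative f (at x) (axis i 1))"

definition lie_poisson :: "(complex^'n \<Rightarrow> complex^'n \<Rightarrow> complex^'n) \<Rightarrow>
    (complex^'n \<Rightarrow> complex) \<Rightarrow> (complex^'n \<Rightarrow> complex) \<Rightarrow> complex^'n \<Rightarrow> complex" where
  "lie_poisson br f h x = pair x (br (dF f x) (dF h x))"

definition frozen_bracket :: "(complex^'n \<Rightarrow> complex^'n \<Rightarrow> complex^'n) \<Rightarrow> complex^'n \<Rightarrow>
    (complex^'n \<Rightarrow> complex) \<Rightarrow> (complex^'n \<Rightarrow> complex) \<Rightarrow> complex^'n \<Rightarrow> complex" where
  "frozen_bracket br a f h x = pair a (br (dF f x) (dF h x))"

inductive poly_fun :: "(complex^'n \<Rightarrow> complex) \<Rightarrow> bool" where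
  pf_const: "poly_fun (\<lambda>x. c)"
| pf_coord: "poly_fun (\<lambda>x. x$i)"
| pf_add: "poly_fun f \<Longrightarrow> poly_fun g \<Longrightarrow> poly_fun (\<lambda>x. f x + g x)"
| pf_mult: "poly_fun f \<Longrightarrow> poly_fun g \<Longrightarrow> poly_fun (\<lambda>x. f x * g x)"

inductive_set gen_alg :: "((complex^'n \<Rightarrow> complex) set) \<Rightarrow> (complex^'n \<Rightarrow> complex) set"
  for G where
  ga_gen: "f \<in> G \<Longrightarrow> f \<in> gen_alg G"
| ga_const: "(\<lambda>x. c) \<in> gen_alg G"
| ga_add: "f \<in> gen_alg G \<Longrightarrow> g \<in> gen_alg G \<Longrightarrow> (\<lambda>x. f x + g x) \<in> gen_alg G"
| ga_mult: "f \<in> gen_alg G \<Longrightarrow> g \<in> gen_alg G \<Longrightarrow> (\<lambda>x. f x * g x) \<in> gen_alg G"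

definition holo_on :: "(complex^'n \<Rightarrow> complex) \<Rightarrow> (complex^'n) set \<Rightarrow> bool" where
  "holo_on f U \<longleftrightarrow> (\<forall>x\<in>U. \<exists>L. (f has_derivative L) (at x) \<and> (\<forall>c v. L (c *s v) = c * L v))"

text \<open>Local analytic invariant of the coadjoint representation on an open neighbourhood U
(infinitesimal invariance: df(x) lies in g_x).\<close>
definition local_invariant :: "(complex^'n \<Rightarrow> complex^'n \<Rightarrow> complex^'n) \<Rightarrow>
    (complex^'n \<Rightarrow> complex) \<Rightarrow> (complex^'n) set \<Rightarrow> bool" where
  "local_invariant br f U \<longleftrightarrow> open U \<and> holo_on f U \<and> (\<forall>x\<in>U. dF f x \<in> stab br x)"

definition shift_coeff :: "(complex^'n \<Rightarrow> complex) \<Rightarrow> complex^'n \<Rightarrow> nat \<Rightarrow> complex^'n \<Rightarrow> complex" where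
  "shift_coeff f a j x = (deriv ^^ j) (\<lambda>t. f (a + t *s x)) 0 / fact j"

definition semi_invariant :: "(complex^'n \<Rightarrow> complex^'n \<Rightarrow> complex^'n) \<Rightarrow> (complex^'n \<Rightarrow> complex) \<Rightarrow> bool" where
  "semi_invariant br g \<longleftrightarrow> poly_fun g \<and> (\<exists>x. g x \<noteq> 0) \<and>
     (\<exists>w. \<forall>f. poly_fun f \<longrightarrow> (\<forall>x. lie_poisson br f g x = pair w (dF f x) * g x))"

definition shifts_alg :: "(nat \<Rightarrow> complex^'n \<Rightarrow> complex) \<Rightarrow> nat \<Rightarrow> complex^'n \<Rightarrow> (complex^'n \<Rightarrow> complex) set" where
  "shifts_alg f m a = gen_alg {shift_coeff (f i) a j | i j. i < m \<and> j > 0}"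

definition shifts_si_alg :: "(complex^'n \<Rightarrow> complex^'n \<Rightarrow> complex^'n) \<Rightarrow>
    (nat \<Rightarrow> complex^'n \<Rightarrow> complex) \<Rightarrow> nat \<Rightarrow> complex^'n \<Rightarrow> (complex^'n \<Rightarrow> complex) set" where
  "shifts_si_alg br f m a = gen_alg ({shift_coeff (f i) a j | i j. i < m \<and> j > 0} \<union>
      {(\<lambda>x. g (x + t *s a)) | g t. semi_invariant br g})"

end

theory Submission
  imports Defs "HOL-Complex_Analysis.Cauchy_Integral_Formula"
begin

text \<open>
  This is the argument of Mishchenko and Fomenko. By Cauchy's formula the shift coefficient
  f_j(x) is the mean of f(a + s x) / s^j over a small circle |s| = r; differentiating under the
  integral sign shows that df_j(x) lies in the span of the differentials df(a + s x), |s| = r,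
  and each of these lies in the stabiliser of a + s x. A semi-invariant g of weight w satisfies
  <y, [xi, dg(y)]> = <w, xi> g(y); hence w annihilates the differentials of all local invariants
  and of all semi-invariants, and dg(x + t a) is annihilated by <x + t a, [., zeta]> for every such
  differential zeta. So for any two generators the bracket B of their differentials satisfies two
  linearly independent relations between <x, B> and <a, B> (for two shifted semi-invariants with
  the same shift, by polynomiality in the shift), and both vanish. Finally
  (P, Q) \<mapsto> <z, [dP, dQ]> is a biderivation, so commutativity passes from the generators to
  the algebra they generate.
\<close>

section \<open>The coordinate pairing and the Lie bracket\<close>

lemma pair_commute: "pair x v = pair v x"
  unfolding pair_def by (simp add: mult.commute)

lemma pair_add_left: "pair (x + y) v = pair x v + pair y v"
  unfolding pair_def by (simp add: distrib_right sum.distrib)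

lemma pair_smult_left: "pair (c *s x) v = c * pair x v"
  unfolding pair_def by (simp add: sum_distrib_left mult.assoc)

lemma pair_add_right: "pair x (v + w) = pair x v + pair x w"
  by (simp add: pair_commute[of x] pair_add_left)

lemma pair_smult_right: "pair x (c *s v) = c * pair x v"
  by (simp add: pair_commute[of x] pair_smult_left)

lemma pair_uminus_left: "pair (- x) v = - pair x v"
  unfolding pair_def by (simp add: sum_negf)

lemma pair_zero_right [simp]: "pair x 0 = 0"
  unfolding pair_def by simp

lemma pair_sum_left: "pair (sum f S) v = (\<Sum>q\<in>S. pair (f q) v)"
  unfolding pair_def by (simp add: sum_distrib_right sum.swap[of _ S])

lemma pair_axis_left: "pair (axis p 1) v = v $ p"
proof -
  have "pair (axis p 1) v = (\<Sum>i\<in>UNIV. if i = p then v $ i else 0)"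
    unfolding pair_def by (intro sum.cong) (auto simp: axis_def)
  then show ?thesis by simp
qed

lemma bounded_linear_pair_left: "bounded_linear (\<lambda>x. pair x v)"
  unfolding pair_def by (intro bounded_linear_sum bounded_linear_mult_const bounded_linear_vec_nth)

lemma continuous_on_pair [continuous_intros]:
  "continuous_on S g \<Longrightarrow> continuous_on S h \<Longrightarrow> continuous_on S (\<lambda>z. pair (g z) (h z))"
  unfolding pair_def by (intro continuous_intros)

lemma pair_eq_0_if_independent_combinations:
  assumes "pair (\<alpha> *s x + \<beta> *s a) B = 0" and "pair (\<gamma> *s x + \<delta> *s a) B = 0"
    and "\<alpha> * \<delta> \<noteq> \<beta> * \<gamma>"
  shows "pair x B = 0 \<and> pair a B = 0"
proof -
  define X A where "X = pair x B" and "A = pair a B"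
  have "\<alpha> * X + \<beta> * A = 0" "\<gamma> * X + \<delta> * A = 0"
    using assms(1,2) by (simp_all add: X_def A_def pair_add_left pair_smult_left)
  moreover have "(\<alpha> * \<delta> - \<beta> * \<gamma>) * X = \<delta> * (\<alpha> * X + \<beta> * A) - \<beta> * (\<gamma> * X + \<delta> * A)"
    and "(\<alpha> * \<delta> - \<beta> * \<gamma>) * A = \<alpha> * (\<gamma> * X + \<delta> * A) - \<gamma> * (\<alpha> * X + \<beta> * A)"
    by (simp_all add: algebra_simps)
  ultimately have "(\<alpha> * \<delta> - \<beta> * \<gamma>) * X = 0" "(\<alpha> * \<delta> - \<beta> * \<gamma>) * A = 0"
    by simp_all
  then show ?thesis using assms(3) by (simp add: X_def A_def)
qed

lemma norm_vector_smult: "norm (c *s (v::complex^'n)) = cmod c * norm v"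
proof -
  have "norm (c *s v) = sqrt ((cmod c)\<^sup>2 * (\<Sum>i\<in>UNIV. (cmod (v $ i))\<^sup>2))"
    unfolding norm_vec_def L2_set_def by (simp add: norm_mult power_mult_distrib sum_distrib_left)
  then show ?thesis
    unfolding norm_vec_def L2_set_def by (simp add: real_sqrt_mult)
qed

lemma continuous_on_vector_smult [continuous_intros]:
  fixes g :: "'a::topological_space \<Rightarrow> complex^'n"
  assumes "continuous_on S c" and "continuous_on S g"
  shows "continuous_on S (\<lambda>x. c x *s g x)"
proof -
  have "(\<lambda>x. c x *s g x) = (\<lambda>x. \<chi> i. c x * g x $ i)"
    by (rule ext) (simp add: vec_eq_iff)
  then show ?thesis
    using assms by (simp only:) (intro continuous_intros)
qed

locale complex_lie_algebra =
  fixes br :: "complex^'n \<Rightarrow> complex^'n \<Rightarrow> complex^'n"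
  assumes lie_algebra: "lie_algebra br"
begin

lemma bracket_add_left: "br (x + y) z = br x z + br y z"
  using lie_algebra unfolding lie_algebra_def by blast

lemma bracket_smult_left: "br (c *s x) y = c *s br x y"
  using lie_algebra unfolding lie_algebra_def by blast

lemma bracket_antisym: "br x y = - br y x"
  using lie_algebra unfolding lie_algebra_def by blast

lemma bracket_zero_left [simp]: "br 0 y = 0"
  using bracket_smult_left[of 0 y y] by simp

lemma bracket_self [simp]: "br x x = 0"
  using bracket_antisym[of x x] by (simp add: vec_eq_iff)

lemma bracket_sum_left: "br (sum f S) u = (\<Sum>q\<in>S. br (f q) u)"
  by (induction S rule: infinite_finite_induct) (auto simp: bracket_add_left)

lemma pair_bracket_antisym: "pair z (br u v) = - pair z (br v u)"
  unfolding pair_def by (subst bracket_antisym) (simp add: sum_negf)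

lemma pair_bracket_left_linear: "\<exists>c. \<forall>\<zeta>. pair z (br \<zeta> \<eta>) = pair c \<zeta>"
proof (intro exI allI)
  fix \<zeta> :: "complex^'n"
  have "pair z (br \<zeta> \<eta>) = pair z (br (\<Sum>p\<in>UNIV. (\<zeta> $ p) *s axis p 1) \<eta>)"
    by (simp add: basis_expansion)
  also have "\<dots> = pair (\<chi> p. pair z (br (axis p 1) \<eta>)) \<zeta>"
    by (simp add: bracket_sum_left bracket_smult_left pair_commute[of z] pair_sum_left
        pair_smult_left) (simp add: pair_def mult.commute)
  finally show "pair z (br \<zeta> \<eta>) = pair (\<chi> p. pair z (br (axis p 1) \<eta>)) \<zeta>" .
qed

lemma pair_bracket_right_linear: "\<exists>c. \<forall>\<eta>. pair z (br \<zeta> \<eta>) = pair c \<eta>"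
proof -
  obtain c where "\<forall>\<eta>. pair z (br \<eta> \<zeta>) = pair c \<eta>"
    using pair_bracket_left_linear by blast
  then have "\<forall>\<eta>. pair z (br \<zeta> \<eta>) = pair (- c) \<eta>"
    by (simp add: pair_bracket_antisym[of z \<zeta>] pair_uminus_left)
  then show ?thesis by blast
qed

end

section \<open>Differentials\<close>

lemma dF_eqI:
  assumes "(f has_derivative (\<lambda>v. pair v D)) (at x)"
  shows "dF f x = D"
  using frechet_derivative_at[OF assms, symmetric] unfolding dF_def
  by (simp add: pair_axis_left vec_eq_iff)

lemma has_derivative_imp_pair_dF:
  fixes f :: "complex^'n \<Rightarrow> complex"
  assumes deriv: "(f has_derivative L) (at x)" and hom: "\<And>c v. L (c *s v) = c * L v"
  shows "L = (\<lambda>v. pair v (dF f x))"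
proof
  fix v :: "complex^'n"
  have "L v = L (\<Sum>p\<in>UNIV. (v $ p) *s axis p 1)"
    by (simp add: basis_expansion)
  also have "\<dots> = (\<Sum>p\<in>UNIV. v $ p * L (axis p 1))"
    using has_derivative_linear[OF deriv] by (simp add: linear_sum hom)
  also have "\<dots> = pair v (dF f x)"
    unfolding dF_def pair_def frechet_derivative_at[OF deriv, symmetric] by simp
  finally show "L v = pair v (dF f x)" .
qed

lemma dF_const: "dF (\<lambda>x. c) x = 0"
  by (rule dF_eqI) simp

lemma dF_add:
  assumes "P differentiable (at x)" and "Q differentiable (at x)"
  shows "dF (\<lambda>x. P x + Q x) x = dF P x + dF Q x"
proof -
  have "frechet_derivative (\<lambda>x. P x + Q x) (at x) =
      (\<lambda>h. frechet_derivative P (at x) h + frechet_derivative Q (at x) h)"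
    using assms by (intro frechet_derivative_at[symmetric] has_derivative_add)
      (simp_all add: frechet_derivative_works[symmetric])
  then show ?thesis unfolding dF_def by (simp add: vec_eq_iff)
qed

lemma dF_mult:
  assumes "P differentiable (at x)" and "Q differentiable (at x)"
  shows "dF (\<lambda>x. P x * Q x) x = P x *s dF Q x + Q x *s dF P x"
proof -
  have "frechet_derivative (\<lambda>x. P x * Q x) (at x) =
      (\<lambda>h. P x * frechet_derivative Q (at x) h + frechet_derivative P (at x) h * Q x)"
    using assms by (intro frechet_derivative_at[symmetric] has_derivative_mult)
      (simp_all add: frechet_derivative_works[symmetric])
  then show ?thesis unfolding dF_def by (simp add: vec_eq_iff mult.commute)
qed

lemma has_derivative_scaled_line:
  assumes "(f has_derivative (\<lambda>v. pair v D)) (at (a + c *s y))"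
  shows "((\<lambda>y. f (a + c *s y)) has_derivative (\<lambda>v. c * pair v D)) (at y)"
proof -
  have "bounded_linear (\<lambda>v::complex^'n. c *s v)"
    by (rule linear_conv_bounded_linear[THEN iffD1])
      (auto simp: linear_iff vec_eq_iff algebra_simps)
  then have "((\<lambda>y. a + c *s y) has_derivative (\<lambda>v. c *s v)) (at y)"
    by (auto intro!: derivative_eq_intros bounded_linear_imp_has_derivative)
  from has_derivative_compose[OF this assms] show ?thesis
    by (simp add: o_def pair_smult_left)
qed

lemma has_field_derivative_along_line:
  assumes "(f has_derivative (\<lambda>v. pair v D)) (at (y + s *s w))"
  shows "((\<lambda>s. f (y + s *s w)) has_field_derivative pair w D) (at s)"
proof -
  have "bounded_linear (\<lambda>s::complex. s *s w)"
    by (rule linear_conv_bounded_linear[THEN iffD1])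
      (auto simp: linear_iff vec_eq_iff algebra_simps)
  then have "((\<lambda>s. y + s *s w) has_derivative (\<lambda>d. d *s w)) (at s)"
    by (auto intro!: derivative_eq_intros bounded_linear_imp_has_derivative)
  from has_derivative_compose[OF this assms] show ?thesis
    unfolding has_field_derivative_def by (simp add: o_def pair_smult_left mult.commute[of _ "pair w D"])
qed

lemma holo_on_has_derivative:
  assumes "holo_on f U" and "z \<in> U"
  shows "(f has_derivative (\<lambda>v. pair v (dF f z))) (at z)"
proof -
  obtain L where "(f has_derivative L) (at z)" and "\<And>c v. L (c *s v) = c * L v"
    using assms unfolding holo_on_def by blast
  moreover from this have "L = (\<lambda>v. pair v (dF f z))"
    by (rule has_derivative_imp_pair_dF)
  ultimately show ?thesis by simp
qed

lemma holo_on_continuous: "holo_on f U \<Longrightarrow> continuous_on U f"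
  by (meson continuous_at_imp_continuous_on has_derivative_continuous holo_on_has_derivative)

lemma holo_on_line_has_field_derivative:
  assumes "holo_on f U" and "y + s *s v \<in> U"
  shows "((\<lambda>s. f (y + s *s v)) has_field_derivative pair v (dF f (y + s *s v))) (at s)"
  by (rule has_field_derivative_along_line[OF holo_on_has_derivative[OF assms]])

lemma holo_on_line_holomorphic:
  assumes "holo_on f U" and "\<And>s. s \<in> S \<Longrightarrow> y + s *s v \<in> U"
  shows "(\<lambda>s. f (y + s *s v)) holomorphic_on S"
  unfolding holomorphic_on_def field_differentiable_def
  using holo_on_line_has_field_derivative[OF assms(1) assms(2)] has_field_derivative_at_within
  by blast

section \<open>Polynomial functions\<close>

lemma poly_fun_sum:
  "finite S \<Longrightarrow> (\<And>q. q \<in> S \<Longrightarrow> poly_fun (f q)) \<Longrightarrow> poly_fun (\<lambda>z. \<Sum>q\<in>S. f q z)"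
  by (induction S rule: finite_induct) (auto intro: pf_const pf_add)

lemma poly_fun_differential:
  assumes "poly_fun f"
  shows "(\<forall>z. (f has_derivative (\<lambda>v. pair v (dF f z))) (at z)) \<and> (\<forall>p. poly_fun (\<lambda>z. dF f z $ p))"
  using assms
proof induction
  case (pf_const c)
  then show ?case by (simp add: dF_const poly_fun.pf_const)
next
  case (pf_coord i)
  have "((\<lambda>x. x $ i) has_derivative (\<lambda>v. pair v (axis i 1))) (at z)" for z
    using bounded_linear_imp_has_derivative[OF bounded_linear_vec_nth[of i]]
    by (simp add: pair_commute[of _ "axis i 1"] pair_axis_left)
  moreover from this have "dF (\<lambda>x. x $ i) z = axis i 1" for z
    by (rule dF_eqI)
  ultimately show ?case by (simp add: poly_fun.pf_const)
next
  case (pf_add f g)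
  have "((\<lambda>x. f x + g x) has_derivative (\<lambda>v. pair v (dF f z) + pair v (dF g z))) (at z)" for z
    using pf_add.IH by (intro has_derivative_add) blast+
  then have "((\<lambda>x. f x + g x) has_derivative (\<lambda>v. pair v (dF f z + dF g z))) (at z)" for z
    by (simp add: pair_add_right)
  moreover from this have "dF (\<lambda>x. f x + g x) z = dF f z + dF g z" for z
    by (rule dF_eqI)
  ultimately show ?case using pf_add.IH by (simp add: poly_fun.pf_add)
next
  case (pf_mult f g)
  have "((\<lambda>x. f x * g x) has_derivative
      (\<lambda>v. f z * pair v (dF g z) + pair v (dF f z) * g z)) (at z)" for z
    using pf_mult.IH by (intro has_derivative_mult) blast+
  moreover have "(\<lambda>v. f z * pair v (dF g z) + pair v (dF f z) * g z) =
      (\<lambda>v. pair v (f z *s dF g z + g z *s dF f z))" for z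
    by (simp add: pair_add_right pair_smult_right mult.commute)
  ultimately have "((\<lambda>x. f x * g x) has_derivative
      (\<lambda>v. pair v (f z *s dF g z + g z *s dF f z))) (at z)" for z
    by simp
  moreover from this have "dF (\<lambda>x. f x * g x) z = f z *s dF g z + g z *s dF f z" for z
    by (rule dF_eqI)
  ultimately show ?case using pf_mult.IH pf_mult.hyps by (simp add: poly_fun.pf_add poly_fun.pf_mult)
qed

lemma poly_fun_has_derivative:
  "poly_fun f \<Longrightarrow> (f has_derivative (\<lambda>v. pair v (dF f z))) (at z)"
  using poly_fun_differential by blast

lemma poly_fun_pair_dF: "poly_fun f \<Longrightarrow> poly_fun (\<lambda>z. pair w (dF f z))"
  unfolding pair_def using poly_fun_differential
  by (intro poly_fun_sum) (auto intro!: pf_mult pf_const)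

lemma poly_fun_continuous: "poly_fun f \<Longrightarrow> continuous_on S f"
  by (meson continuous_at_imp_continuous_on has_derivative_continuous poly_fun_has_derivative)

lemma poly_fun_shift: "poly_fun g \<Longrightarrow> poly_fun (\<lambda>y. g (y + c))"
  by (induction rule: poly_fun.induct) (auto intro: poly_fun.intros)

lemma dF_poly_fun_shift:
  assumes "poly_fun g"
  shows "dF (\<lambda>y. g (y + c)) x = dF g (x + c)"
proof (rule dF_eqI)
  have "((\<lambda>y. y + c) has_derivative (\<lambda>y. y)) (at x)"
    by (auto intro!: derivative_eq_intros)
  from has_derivative_compose[OF this poly_fun_has_derivative[OF assms]]
  show "((\<lambda>y. g (y + c)) has_derivative (\<lambda>v. pair v (dF g (x + c)))) (at x)"
    by (simp add: o_def)
qed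

lemma poly_fun_pair_left: "poly_fun (\<lambda>z. pair z \<zeta>)"
  unfolding pair_def by (intro poly_fun_sum) (auto intro!: pf_mult pf_coord pf_const)

lemma dF_pair_left: "dF (\<lambda>z. pair z \<zeta>) x = \<zeta>"
  by (rule dF_eqI) (rule bounded_linear_imp_has_derivative[OF bounded_linear_pair_left])

lemma poly_fun_on_line: "poly_fun q \<Longrightarrow> \<exists>P. \<forall>s. q (c + s *s v) = poly P s"
proof (induction rule: poly_fun.induct)
  case (pf_const k)
  then show ?case by (intro exI[of _ "[:k:]"]) auto
next
  case (pf_coord i)
  then show ?case by (intro exI[of _ "[:c $ i, v $ i:]"]) (auto simp: algebra_simps)
next
  case (pf_add f g)
  then obtain P Q where "\<forall>s. f (c + s *s v) = poly P s" "\<forall>s. g (c + s *s v) = poly Q s" by blast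
  then show ?case by (intro exI[of _ "P + Q"]) auto
next
  case (pf_mult f g)
  then obtain P Q where "\<forall>s. f (c + s *s v) = poly P s" "\<forall>s. g (c + s *s v) = poly Q s" by blast
  then show ?case by (intro exI[of _ "P * Q"]) auto
qed

lemma poly_fun_on_line_eq_0:
  assumes "poly_fun q" and "infinite S" and "\<And>s. s \<in> S \<Longrightarrow> q (c + s *s v) = 0"
  shows "q (c + s *s v) = 0"
proof -
  obtain P where P: "\<And>s. q (c + s *s v) = poly P s"
    using poly_fun_on_line[OF assms(1)] by blast
  have "S \<subseteq> {s. poly P s = 0}"
    using assms(3) by (auto simp: P)
  then have "P = 0"
    using assms(2) poly_roots_finite finite_subset by blast
  then show ?thesis by (simp add: P)
qed

lemma poly_fun_eq_0_if_eq_0_on_ball: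
  assumes "poly_fun p" and "e > 0" and "\<And>z. z \<in> ball z0 e \<Longrightarrow> p z = 0"
  shows "p z = 0"
proof (cases "z = z0")
  case True
  then show ?thesis using assms by simp
next
  case False
  define d where "d = e / norm (z - z0)"
  have "d > 0" using False assms(2) by (simp add: d_def)
  have "p (z0 + s *s (z - z0)) = 0" if "s \<in> ball 0 d" for s
  proof (rule assms(3))
    have "norm (s *s (z - z0)) < e"
      using that False by (simp add: norm_vector_smult d_def pos_less_divide_eq del: vector_ssub_ldistrib)
    then show "z0 + s *s (z - z0) \<in> ball z0 e" by (simp add: dist_norm del: vector_ssub_ldistrib)
  qed
  moreover have "infinite (ball (0::complex) d)"
    using islimpt_eq_infinite_ball[THEN iffD1, OF islimpt_UNIV, rule_format, OF \<open>d > 0\<close>]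
    by simp
  ultimately have "p (z0 + 1 *s (z - z0)) = 0"
    by (rule poly_fun_on_line_eq_0[OF assms(1), rotated]) blast
  then show ?thesis by simp
qed

lemma poly_fun_mult_eq_0D:
  assumes "poly_fun p" "poly_fun q" "\<And>z. p z * q z = 0" "q z0 \<noteq> 0"
  shows "p z = 0"
proof -
  have "isCont q z0"
    using poly_fun_continuous[OF assms(2), of UNIV] by (simp add: continuous_on_eq_continuous_at)
  then obtain e where "e > 0" "\<And>y. dist z0 y < e \<Longrightarrow> q y \<noteq> 0"
    using continuous_at_avoid[OF \<open>isCont q z0\<close> assms(4)] by blast
  show ?thesis
  proof (rule poly_fun_eq_0_if_eq_0_on_ball[OF assms(1) \<open>e > 0\<close>])
    fix y assume "y \<in> ball z0 e"
    then show "p y = 0" using assms(3)[of y] \<open>\<And>y. dist z0 y < e \<Longrightarrow> q y \<noteq> 0\<close> by auto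
  qed
qed

lemma smult_pderiv_eq_smultD:
  fixes P :: "complex poly"
  assumes "smult c (pderiv P) = smult b P" and "c \<noteq> 0"
  shows "b = 0 \<or> P = 0"
proof (rule ccontr)
  assume "\<not> (b = 0 \<or> P = 0)"
  then have "degree (pderiv P) = degree P"
    using arg_cong[OF assms(1), of degree] assms(2) by simp
  then have "degree P = 0"
    by (simp add: degree_pderiv)
  then have "smult b P = 0"
    using assms(1) by (simp add: pderiv_eq_0_iff[symmetric])
  then show False
    using \<open>\<not> (b = 0 \<or> P = 0)\<close> by simp
qed

section \<open>Cauchy integrals along complex lines\<close>

lemma norm_circlepath_0: "0 \<le> r \<Longrightarrow> cmod (circlepath 0 r t) = r"
  by (simp add: circlepath norm_mult)

lemma circlepath_0_nonzero: "0 < r \<Longrightarrow> circlepath 0 r t \<noteq> 0"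
  using norm_circlepath_0[of r t] by auto

lemma continuous_on_circlepath [continuous_intros]:
  "continuous_on S (\<lambda>x. circlepath z r (h x))" if "continuous_on S h"
  unfolding circlepath by (intro continuous_intros that)

lemma shift_coeff_has_integral:
  assumes hol: "holo_on f U" and r: "0 < r" and inU: "\<And>s. cmod s \<le> r \<Longrightarrow> a + s *s x \<in> U"
  shows "((\<lambda>t. f (a + circlepath 0 r t *s x) / circlepath 0 r t ^ j) has_integral
           shift_coeff f a j x) {0..1}"
proof -
  define F where "F = (\<lambda>s. f (a + s *s x))"
  have "continuous_on (cball 0 r) F" "F holomorphic_on ball 0 r"
    using inU unfolding F_def
    by (auto intro!: holomorphic_on_imp_continuous_on holo_on_line_holomorphic[OF hol])
  then have "((\<lambda>u. F u / (u - 0) ^ Suc j) has_contour_integral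
      (2 * pi * \<i> / fact j * (deriv ^^ j) F 0)) (circlepath 0 r)"
    by (intro Cauchy_has_contour_integral_higher_derivative_circlepath) (simp_all add: r)
  note integral = this[unfolded has_contour_integral_def]
  have eq: "1 / (2 * pi * \<i>) * (F (circlepath 0 r t) / (circlepath 0 r t - 0) ^ Suc j *
        vector_derivative (circlepath 0 r) (at t within {0..1})) =
      f (a + circlepath 0 r t *s x) / circlepath 0 r t ^ j" if "t \<in> {0..1}" for t
  proof -
    have "vector_derivative (circlepath 0 r) (at t within {0..1}) = 2 * pi * \<i> * circlepath 0 r t"
      using that vector_derivative_circlepath01[of t 0 r] by (simp add: circlepath)
    then show ?thesis
      using circlepath_0_nonzero[OF r, of t] by (simp add: F_def field_simps)
  qed
  have "((\<lambda>t. f (a + circlepath 0 r t *s x) / circlepath 0 r t ^ j) has_integral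
      1 / (2 * pi * \<i>) * (2 * pi * \<i> / fact j * (deriv ^^ j) F 0)) {0..1}"
    using has_integral_mult_right[OF integral] by (rule has_integral_cong[THEN iffD1, rotated]) (rule eq)
  then show ?thesis by (simp add: shift_coeff_def F_def)
qed

lemma shift_coeff_1:
  assumes "holo_on f U" and "a \<in> U"
  shows "shift_coeff f a 1 v = pair v (dF f a)"
  using holo_on_line_has_field_derivative[of f U a 0 v] assms
  by (simp add: shift_coeff_def DERIV_imp_deriv)

lemma pair_dF_eq_integral:
  assumes hol: "holo_on f U" and r: "0 < r" and inU: "\<And>s. cmod s \<le> r \<Longrightarrow> y + s *s v \<in> U"
  shows "pair v (dF f y) = integral {0..1} (\<lambda>t. f (y + circlepath 0 r t *s v) / circlepath 0 r t)"
  using shift_coeff_has_integral[OF hol r inU, of 1] shift_coeff_1[OF hol inU[of 0]] r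
  by (simp add: integral_unique)

lemma continuous_on_pair_dF:
  assumes hol: "holo_on f U" and r: "0 < r" and inU: "\<And>y s. y \<in> B \<Longrightarrow> cmod s \<le> r \<Longrightarrow> y + s *s v \<in> U"
  shows "continuous_on B (\<lambda>y. pair v (dF f y))"
proof -
  let ?\<gamma> = "circlepath 0 r"
  have "continuous_on (B \<times> cbox 0 1) (\<lambda>z. f (fst z + ?\<gamma> (snd z) *s v))"
    using inU norm_circlepath_0[of r] r
    by (intro continuous_on_compose2[OF holo_on_continuous[OF hol]]) (auto intro!: continuous_intros)
  then have "continuous_on (B \<times> cbox 0 1) (\<lambda>(y, t). f (y + ?\<gamma> t *s v) / ?\<gamma> t)"
    using circlepath_0_nonzero[OF r] by (auto intro!: continuous_intros simp: case_prod_beta)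
  then have "continuous_on B (\<lambda>y. integral (cbox 0 1) (\<lambda>t. f (y + ?\<gamma> t *s v) / ?\<gamma> t))"
    by (rule integral_continuous_on_param)
  then show ?thesis
    by (rule continuous_on_eq) (use pair_dF_eq_integral[OF hol r inU] in simp)
qed

text \<open>holo_on only asks for complex differentiability; continuity of the differential comes from
  the Cauchy formula pair_dF_eq_integral.\<close>

lemma continuous_on_dF:
  assumes hol: "holo_on f U" and U: "open U"
  shows "continuous_on U (dF f)"
proof -
  have "isCont (\<lambda>y. dF f y $ p) y0" if "y0 \<in> U" for p y0
  proof -
    obtain \<epsilon> where "\<epsilon> > 0" and ball: "ball y0 (2 * \<epsilon>) \<subseteq> U"
      using U \<open>y0 \<in> U\<close> open_contains_ball by (metis field_sum_of_halves half_gt_zero mult_2)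
    have "y + s *s axis p 1 \<in> U" if "y \<in> ball y0 \<epsilon>" "cmod s \<le> \<epsilon>" for y s
    proof -
      have "dist y0 (y + s *s axis p 1) \<le> dist y0 y + norm (s *s axis p 1)"
        using dist_triangle[of y0 "y + s *s axis p 1" y] by (simp add: dist_norm)
      also have "\<dots> < 2 * \<epsilon>"
        using that by (simp add: norm_vector_smult)
      finally show ?thesis using ball by auto
    qed
    then have "continuous_on (ball y0 \<epsilon>) (\<lambda>y. pair (axis p 1) (dF f y))"
      by (rule continuous_on_pair_dF[OF hol \<open>\<epsilon> > 0\<close>])
    then show ?thesis
      using continuous_on_interior \<open>\<epsilon> > 0\<close> by (fastforce simp: pair_axis_left)
  qed
  then have "continuous_on U (\<lambda>y. \<chi> p. dF f y $ p)"
    by (intro continuous_on_vec_lambda continuous_at_imp_continuous_on) blast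
  then show ?thesis by simp
qed

section \<open>Differentiating shift coefficients\<close>

lemma eventually_line_in_open:
  assumes "open U" and "a \<in> U"
  shows "\<forall>\<^sub>F r in at_right 0. \<forall>s y. cmod s \<le> r \<longrightarrow> dist y x < 1 \<longrightarrow> a + s *s y \<in> U"
proof -
  obtain \<delta> where \<delta>: "\<delta> > 0" "ball a \<delta> \<subseteq> U"
    using assms open_contains_ball by blast
  have "a + s *s y \<in> U"
    if "0 < r" "r < \<delta> / (norm x + 1)" "cmod s \<le> r" "dist y x < 1" for r s y
  proof -
    have "norm y \<le> norm x + 1"
      using that(4) norm_triangle_ineq2[of y x] by (simp add: dist_norm)
    then have "norm (s *s y) \<le> r * (norm x + 1)"
      using that(3) by (simp add: norm_vector_smult mult_mono')
    also have "\<dots> < \<delta>"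
      using that(2) by (simp add: pos_less_divide_eq add_nonneg_pos)
    finally show ?thesis
      using \<delta>(2) by (auto simp: dist_norm)
  qed
  then show ?thesis
    unfolding eventually_at_right_field using \<delta>(1)
    by (intro exI[of _ "\<delta> / (norm x + 1)"]) (auto simp: add_nonneg_pos)
qed

definition shift_integrand_deriv ::
    "(complex^'n \<Rightarrow> complex) \<Rightarrow> complex^'n \<Rightarrow> nat \<Rightarrow> real \<Rightarrow> complex^'n \<Rightarrow> real \<Rightarrow>
      (complex^'n) \<Rightarrow>\<^sub>L complex"
  where "shift_integrand_deriv f a j r y t =
    Blinfun (\<lambda>v. circlepath 0 r t / circlepath 0 r t ^ j * pair v (dF f (a + circlepath 0 r t *s y)))"

lemma shift_integrand_deriv_apply [simp]:
  "blinfun_apply (shift_integrand_deriv f a j r y t) =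
    (\<lambda>v. circlepath 0 r t / circlepath 0 r t ^ j * pair v (dF f (a + circlepath 0 r t *s y)))"
  unfolding shift_integrand_deriv_def
  by (intro bounded_linear_Blinfun_apply bounded_linear_const_mult bounded_linear_pair_left)

lemma shift_integrand_has_derivative:
  assumes "holo_on f U" and "a + circlepath 0 r t *s y \<in> U"
  shows "((\<lambda>y. f (a + circlepath 0 r t *s y) / circlepath 0 r t ^ j) has_derivative
           blinfun_apply (shift_integrand_deriv f a j r y t)) (at y)"
proof -
  let ?c = "circlepath 0 r t"
  have "((\<lambda>y. f (a + ?c *s y) * (1 / ?c ^ j)) has_derivative
      (\<lambda>v. ?c * pair v (dF f (a + ?c *s y)) * (1 / ?c ^ j))) (at y)"
    by (intro has_derivative_mult_left has_derivative_scaled_line holo_on_has_derivative[OF assms])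
  then show ?thesis
    by (simp add: fun_eq_iff)
qed

lemma continuous_on_shift_integrand_deriv:
  assumes hol: "holo_on f U" and U: "open U" and r: "0 < r"
    and inU: "\<And>s y. cmod s \<le> r \<Longrightarrow> y \<in> B \<Longrightarrow> a + s *s y \<in> U"
  shows "continuous_on (B \<times> cbox 0 1) (\<lambda>(y, t). shift_integrand_deriv f a j r y t)"
proof (rule continuous_on_blinfun_componentwise)
  fix v
  have "continuous_on (B \<times> cbox 0 1) (\<lambda>z. dF f (a + circlepath 0 r (snd z) *s fst z))"
    using inU r norm_circlepath_0[of r]
    by (intro continuous_on_compose2[OF continuous_on_dF[OF hol U]]) (auto intro!: continuous_intros)
  then show "continuous_on (B \<times> cbox 0 1) (\<lambda>z. blinfun_apply ((\<lambda>(y, t). shift_integrand_deriv f a j r y t) z) v)"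
    using r by (auto intro!: continuous_intros simp: case_prod_beta circlepath_0_nonzero)
qed

lemma shift_coeff_has_derivative:
  assumes hol: "holo_on f U" and U: "open U" and r: "0 < r"
    and inU: "\<And>s y. cmod s \<le> r \<Longrightarrow> dist y x < 1 \<Longrightarrow> a + s *s y \<in> U"
  shows "(shift_coeff f a j has_derivative
      (\<lambda>v. integral {0..1} (\<lambda>t. circlepath 0 r t / circlepath 0 r t ^ j *
                                  pair v (dF f (a + circlepath 0 r t *s x))))) (at x)"
proof -
  define B where "B = ball x 1"
  define D where "D = (\<lambda>t. shift_integrand_deriv f a j r x t)"
  have x: "x \<in> B" and inB: "\<And>s y. cmod s \<le> r \<Longrightarrow> y \<in> B \<Longrightarrow> a + s *s y \<in> U"
    using inU by (auto simp: B_def dist_commute)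
  have integral: "((\<lambda>t. f (a + circlepath 0 r t *s y) / circlepath 0 r t ^ j) has_integral
      shift_coeff f a j y) (cbox 0 1)" if "y \<in> B" for y
    using shift_coeff_has_integral[OF hol r] inB[OF _ that] by simp
  have cont: "continuous_on (B \<times> cbox 0 1) (\<lambda>(y, t). shift_integrand_deriv f a j r y t)"
    by (rule continuous_on_shift_integrand_deriv[OF hol U r inB])
  have "((\<lambda>y. f (a + circlepath 0 r t *s y) / circlepath 0 r t ^ j) has_derivative
      blinfun_apply (shift_integrand_deriv f a j r y t)) (at y within B)" if "y \<in> B" for y t
  proof -
    have "a + circlepath 0 r t *s y \<in> U"
      using inB[OF _ that] r by (simp add: norm_circlepath_0)
    from shift_integrand_has_derivative[OF hol this] show ?thesis
      by (rule has_derivative_at_withinI)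
  qed
  from leibniz_rule[OF this _ cont x]
  have "((\<lambda>y. integral (cbox 0 1) (\<lambda>t. f (a + circlepath 0 r t *s y) / circlepath 0 r t ^ j))
      has_derivative integral (cbox 0 1) D) (at x)"
    using integral at_within_open[OF x] unfolding D_def by (force simp: B_def)
  then have "(shift_coeff f a j has_derivative integral (cbox 0 1) D) (at x)"
    by (rule has_derivative_transform_within_open[of _ _ _ _ B])
      (use x integral in \<open>auto simp: B_def integral_unique\<close>)
  moreover have "continuous_on (cbox 0 1) (\<lambda>t. (\<lambda>(y, t). shift_integrand_deriv f a j r y t) (x, t))"
    by (rule continuous_on_compose2[OF cont]) (auto intro!: continuous_intros simp: x)
  then have "D integrable_on cbox 0 1"
    by (simp add: D_def integrable_continuous_interval)
  then have "blinfun_apply (integral (cbox 0 1) D) = (\<lambda>v. integral {0..1} (\<lambda>t.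
      circlepath 0 r t / circlepath 0 r t ^ j * pair v (dF f (a + circlepath 0 r t *s x))))"
    by (simp add: fun_eq_iff blinfun_apply_integral D_def)
  ultimately show ?thesis
    by simp
qed

text \<open>The second clause says that d f_j(x) lies in the span of the differentials df(a + s x)
  with |s| = r.\<close>

definition admissible_radius ::
    "(complex^'n \<Rightarrow> complex) \<Rightarrow> (complex^'n) set \<Rightarrow> complex^'n \<Rightarrow> complex^'n \<Rightarrow> nat \<Rightarrow> real \<Rightarrow> bool"
  where "admissible_radius f U a x j r \<longleftrightarrow> (\<forall>s. cmod s \<le> r \<longrightarrow> a + s *s x \<in> U) \<and>
    (\<forall>c. (\<forall>s. cmod s = r \<longrightarrow> pair c (dF f (a + s *s x)) = 0) \<longrightarrow> pair c (dF (shift_coeff f a j) x) = 0)"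

lemma eventually_admissible_radius:
  assumes hol: "holo_on f U" and U: "open U" and "a \<in> U"
  shows "\<forall>\<^sub>F r in at_right 0. admissible_radius f U a x j r"
  using eventually_line_in_open[OF U \<open>a \<in> U\<close>, of x] eventually_at_right_less[of 0]
proof eventually_elim
  case (elim r)
  let ?\<gamma> = "circlepath 0 r"
  let ?L = "\<lambda>v. integral {0..1} (\<lambda>t. ?\<gamma> t / ?\<gamma> t ^ j * pair v (dF f (a + ?\<gamma> t *s x)))"
  have deriv: "(shift_coeff f a j has_derivative ?L) (at x)"
    using elim by (intro shift_coeff_has_derivative[OF hol U]) auto
  have "?L (k *s v) = k * ?L v" for k v
    by (subst integral_mult_right[symmetric]) (simp add: pair_smult_left algebra_simps)
  then have L: "?L = (\<lambda>v. pair v (dF (shift_coeff f a j) x))"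
    by (rule has_derivative_imp_pair_dF[OF deriv])
  have "pair c (dF (shift_coeff f a j) x) = 0"
    if "\<forall>s. cmod s = r \<longrightarrow> pair c (dF f (a + s *s x)) = 0" for c
    using fun_cong[OF L, of c] that elim norm_circlepath_0[of r] by simp
  with elim show ?case
    unfolding admissible_radius_def by auto
qed

lemma shift_coeff_differentiable:
  assumes hol: "holo_on f U" and U: "open U" and "a \<in> U"
  shows "shift_coeff f a j differentiable (at x)"
proof -
  have "\<forall>\<^sub>F r in at_right 0. 0 < r \<and> (\<forall>s y. cmod s \<le> r \<longrightarrow> dist y x < 1 \<longrightarrow> a + s *s y \<in> U)"
    using eventually_at_right_less eventually_line_in_open[OF U \<open>a \<in> U\<close>] by (rule eventually_conj)
  then obtain r where "0 < r" "\<And>s y. cmod s \<le> r \<Longrightarrow> dist y x < 1 \<Longrightarrow> a + s *s y \<in> U"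
    using eventually_happens'[OF trivial_limit_at_right_real] by blast
  then show ?thesis
    using shift_coeff_has_derivative[OF hol U] unfolding differentiable_def by blast
qed

context complex_lie_algebra
begin

lemma admissible_radius_bracket_left_eq_0:
  assumes "admissible_radius f U a x j r"
    and "\<And>s. cmod s = r \<Longrightarrow> pair z (br (dF f (a + s *s x)) \<eta>) = 0"
  shows "pair z (br (dF (shift_coeff f a j) x) \<eta>) = 0"
proof -
  obtain c where "\<And>\<zeta>. pair z (br \<zeta> \<eta>) = pair c \<zeta>"
    using pair_bracket_left_linear by blast
  with assms show ?thesis
    unfolding admissible_radius_def by simp
qed

lemma admissible_radius_bracket_right_eq_0:
  assumes "admissible_radius f U a x j r"
    and "\<And>s. cmod s = r \<Longrightarrow> pair z (br \<zeta> (dF f (a + s *s x))) = 0"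
  shows "pair z (br \<zeta> (dF (shift_coeff f a j) x)) = 0"
proof -
  obtain c where "\<And>\<eta>. pair z (br \<zeta> \<eta>) = pair c \<eta>"
    using pair_bracket_right_linear by blast
  with assms show ?thesis
    unfolding admissible_radius_def by simp
qed

end

section \<open>Semi-invariants\<close>

definition is_weight :: "(complex^'n \<Rightarrow> complex^'n \<Rightarrow> complex^'n) \<Rightarrow> (complex^'n \<Rightarrow> complex) \<Rightarrow>
    complex^'n \<Rightarrow> bool" where
  "is_weight br g w \<longleftrightarrow> (\<forall>f. poly_fun f \<longrightarrow> (\<forall>x. lie_poisson br f g x = pair w (dF f x) * g x))"

lemma semi_invariant_has_weight: "semi_invariant br g \<Longrightarrow> \<exists>w. is_weight br g w"
  unfolding semi_invariant_def is_weight_def by blast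

lemma is_weight_pair_bracket: "is_weight br g w \<Longrightarrow> pair x (br \<zeta> (dF g x)) = pair w \<zeta> * g x"
  using poly_fun_pair_left[of \<zeta>] unfolding is_weight_def lie_poisson_def by (metis dF_pair_left)

context complex_lie_algebra
begin

lemma local_invariant_pair_bracket: "local_invariant br f U \<Longrightarrow> y \<in> U \<Longrightarrow> pair y (br (dF f y) \<eta>) = 0"
  unfolding local_invariant_def stab_def by blast

lemma weight_orthogonal_dF_self:
  assumes g: "semi_invariant br g" and w: "is_weight br g w"
  shows "pair w (dF g z) = 0"
proof -
  have pg: "poly_fun g" and "\<exists>z. g z \<noteq> 0"
    using g unfolding semi_invariant_def by auto
  moreover have "pair w (dF g z) * g z = 0" for z
    using is_weight_pair_bracket[OF w, of z "dF g z"] by simp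
  ultimately show ?thesis
    using poly_fun_mult_eq_0D[OF poly_fun_pair_dF[OF pg] pg] by blast
qed

lemma semi_invariant_translate_weight:
  assumes g: "semi_invariant br g" and w: "is_weight br g w"
  shows "g (y + s *s w) = g y"
proof -
  have pg: "poly_fun g" using g unfolding semi_invariant_def by auto
  have "((\<lambda>s. g (y + s *s w)) has_field_derivative pair w (dF g (y + s *s w))) (at s)" for s
    by (rule has_field_derivative_along_line[OF poly_fun_has_derivative[OF pg]])
  then have "((\<lambda>s. g (y + s *s w)) has_field_derivative 0) (at s within UNIV)" for s
    by (simp add: weight_orthogonal_dF_self[OF g w])
  then obtain c where "\<And>s. g (y + s *s w) = c"
    using has_field_derivative_zero_constant[of UNIV "\<lambda>s. g (y + s *s w)"] by auto
  from this[of s] this[of 0] show ?thesis by simp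
qed

lemma dF_semi_invariant_translate_weight:
  assumes g: "semi_invariant br g" and w: "is_weight br g w"
  shows "dF g (y + s *s w) = dF g y"
proof -
  have pg: "poly_fun g" using g unfolding semi_invariant_def by auto
  have "(\<lambda>z. g (z + s *s w)) = g"
    using semi_invariant_translate_weight[OF g w] by auto
  then show ?thesis
    using dF_poly_fun_shift[OF pg, of "s *s w" y] by simp
qed

lemma weights_cross_relation:
  assumes "poly_fun g" "is_weight br g w" "poly_fun h" "is_weight br h w'"
  shows "pair w (dF h z) * g z = - (pair w' (dF g z) * h z)"
  using assms pair_bracket_antisym unfolding is_weight_def lie_poisson_def by metis

text \<open>Along the line y + s w the semi-invariant g is constant, so the cross relation becomes the
  linear differential equation g(y) P' = -<w', dg(y)> P for the polynomial P(s) = h(y + s w).\<close>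

lemma cross_term_eq_0_if_nonzero:
  assumes g: "semi_invariant br g" "is_weight br g w" and h: "poly_fun h" "is_weight br h w'"
    and "g y \<noteq> 0"
  shows "pair w' (dF g y) * h y = 0"
proof -
  have pg: "poly_fun g" using g unfolding semi_invariant_def by auto
  obtain P where P: "\<And>s. h (y + s *s w) = poly P s"
    using poly_fun_on_line[OF h(1)] by blast
  have "(poly P has_field_derivative pair w (dF h (y + s *s w))) (at s)" for s
    using has_field_derivative_along_line[OF poly_fun_has_derivative[OF h(1), of "y + s *s w"]]
    by (simp add: P)
  then have "poly (pderiv P) s = pair w (dF h (y + s *s w))" for s
    by (rule DERIV_unique[OF poly_DERIV])
  then have "poly (smult (g y) (pderiv P)) s = poly (smult (- pair w' (dF g y)) P) s" for s
    using weights_cross_relation[OF pg g(2) h, of "y + s *s w"] P[of s]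
    by (simp add: semi_invariant_translate_weight[OF g] dF_semi_invariant_translate_weight[OF g]
        mult.commute)
  then have "smult (g y) (pderiv P) = smult (- pair w' (dF g y)) P"
    by (simp add: poly_eq_poly_eq_iff[symmetric] fun_eq_iff del: poly_smult)
  then have "pair w' (dF g y) = 0 \<or> P = 0"
    using smult_pderiv_eq_smultD \<open>g y \<noteq> 0\<close> by fastforce
  then show ?thesis using P[of 0] by auto
qed

lemma weight_orthogonal_dF_semi_invariant:
  assumes g: "semi_invariant br g" "is_weight br g w" and h: "semi_invariant br h"
  shows "pair w (dF h y) = 0"
proof -
  obtain w' where w': "is_weight br h w'"
    using semi_invariant_has_weight[OF h] by blast
  have pg: "poly_fun g" and ph: "poly_fun h"
    using g h unfolding semi_invariant_def by auto
  obtain z1 where z1: "g z1 \<noteq> 0" using g unfolding semi_invariant_def by auto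
  have "(pair w' (dF g z) * h z) * g z = 0" for z
    using cross_term_eq_0_if_nonzero[OF g ph w'] by (cases "g z = 0") auto
  moreover have "poly_fun (\<lambda>z. pair w' (dF g z) * h z)"
    by (intro pf_mult poly_fun_pair_dF pg ph)
  ultimately have "pair w' (dF g z) * h z = 0" for z
    using poly_fun_mult_eq_0D[OF _ pg _ z1] by blast
  then have "pair w (dF h z) * g z = 0" for z
    using weights_cross_relation[OF pg g(2) ph w'] by simp
  then show ?thesis
    using poly_fun_mult_eq_0D[OF poly_fun_pair_dF[OF ph] pg _ z1] by blast
qed

lemma weight_orthogonal_dF_local_invariant:
  assumes f: "local_invariant br f U" "y \<in> U" and g: "semi_invariant br g" "is_weight br g w"
  shows "pair w (dF f y) = 0"
proof (rule ccontr)
  assume "pair w (dF f y) \<noteq> 0"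
  have hol: "holo_on f U" and U: "open U"
    using f unfolding local_invariant_def by auto
  have pg: "poly_fun g" and "\<exists>z. g z \<noteq> 0"
    using g unfolding semi_invariant_def by auto
  have "continuous_on U (\<lambda>z. pair w (dF f z))"
    using continuous_on_dF[OF hol U] by (intro continuous_intros)
  then have "isCont (\<lambda>z. pair w (dF f z)) y"
    using f(2) U by (simp add: continuous_on_eq_continuous_at)
  then obtain d where "d > 0" and nonzero: "\<And>z. dist y z < d \<Longrightarrow> pair w (dF f z) \<noteq> 0"
    using continuous_at_avoid \<open>pair w (dF f y) \<noteq> 0\<close> by blast
  obtain \<epsilon> where "\<epsilon> > 0" and ball: "ball y \<epsilon> \<subseteq> U"
    using U f(2) open_contains_ball by blast
  have zero: "pair w (dF f z) * g z = 0" if "z \<in> U" for z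
    using local_invariant_pair_bracket[OF f(1) that] is_weight_pair_bracket[OF g(2)] by metis
  have g0: "g z = 0" if "z \<in> ball y (min d \<epsilon>)" for z
  proof -
    have "z \<in> ball y \<epsilon>" "dist y z < d" using that by auto
    then show ?thesis using ball nonzero zero by (metis mult_eq_0_iff subsetD)
  qed
  have "g z = 0" for z
    using poly_fun_eq_0_if_eq_0_on_ball[of g "min d \<epsilon>" y, OF pg _ g0] \<open>d > 0\<close> \<open>\<epsilon> > 0\<close> by simp
  then show False using \<open>\<exists>z. g z \<noteq> 0\<close> by simp
qed

end

section \<open>Commuting generators\<close>

context complex_lie_algebra
begin

lemma shift_coeffs_bracket_eq_0:
  assumes f: "local_invariant br f U" "a \<in> U" and f': "local_invariant br f' U'" "a \<in> U'"
  shows "pair x (br (dF (shift_coeff f a j) x) (dF (shift_coeff f' a k) x)) = 0 \<and>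
         pair a (br (dF (shift_coeff f a j) x) (dF (shift_coeff f' a k) x)) = 0"
proof -
  have "\<forall>\<^sub>F r in at_right 0. admissible_radius f U a x j r \<and> admissible_radius f' U' a x k r"
    using f f' unfolding local_invariant_def by (intro eventually_conj eventually_admissible_radius) auto
  then obtain b where "b > 0"
    and b: "\<And>r. 0 < r \<Longrightarrow> r < b \<Longrightarrow> admissible_radius f U a x j r \<and> admissible_radius f' U' a x k r"
    unfolding eventually_at_right_field by blast
  define r r' where "r = b / 2" and "r' = b / 3"
  have "0 < r" "r < b" "0 < r'" "r' < b" "r \<noteq> r'"
    using \<open>b > 0\<close> by (simp_all add: r_def r'_def)
  then have R: "admissible_radius f U a x j r" "admissible_radius f' U' a x k r'"
    using b by blast+
  have "pair z (br (dF f (a + s *s x)) (dF f' (a + s' *s x))) = 0"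
    if z: "z = x \<or> z = a" and s: "cmod s = r" and s': "cmod s' = r'" for z s s'
  proof -
    define \<zeta> \<theta> where "\<zeta> = dF f (a + s *s x)" and "\<theta> = dF f' (a + s' *s x)"
    have "a + s *s x \<in> U" "a + s' *s x \<in> U'"
      using R s s' unfolding admissible_radius_def by auto
    then have "pair (s *s x + 1 *s a) (br \<zeta> \<theta>) = 0"
      and "pair (s' *s x + 1 *s a) (br \<zeta> \<theta>) = 0"
      using local_invariant_pair_bracket[OF f(1), of _ \<theta>] local_invariant_pair_bracket[OF f'(1), of _ \<zeta>]
        pair_bracket_antisym[of "a + s' *s x" \<zeta> \<theta>]
      by (simp_all add: add.commute \<zeta>_def \<theta>_def)
    moreover have "s \<noteq> s'"
      using s s' \<open>r \<noteq> r'\<close> by auto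
    ultimately show ?thesis
      using z pair_eq_0_if_independent_combinations[of s x 1 a _ s' 1] by (auto simp: \<zeta>_def \<theta>_def)
  qed
  then show ?thesis
    by (blast intro: admissible_radius_bracket_left_eq_0[OF R(1)] admissible_radius_bracket_right_eq_0[OF R(2)])
qed

lemma shift_coeff_shifted_semi_invariant_bracket_eq_0:
  assumes f: "local_invariant br f U" "a \<in> U" and g: "semi_invariant br g"
  shows "pair x (br (dF (shift_coeff f a j) x) (dF g (x + t *s a))) = 0 \<and>
         pair a (br (dF (shift_coeff f a j) x) (dF g (x + t *s a))) = 0"
proof -
  obtain w where w: "is_weight br g w"
    using semi_invariant_has_weight[OF g] by blast
  have "((\<lambda>r::real. r * cmod t) \<longlongrightarrow> 0) (at_right 0)"
    by (intro tendsto_eq_intros) auto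
  then have "\<forall>\<^sub>F r in at_right 0. r * cmod t < 1"
    by (rule order_tendstoD) simp
  moreover have "\<forall>\<^sub>F r in at_right 0. admissible_radius f U a x j r"
    using f unfolding local_invariant_def by (intro eventually_admissible_radius) auto
  ultimately obtain r where "r * cmod t < 1" and R: "admissible_radius f U a x j r"
    using eventually_happens'[OF trivial_limit_at_right_real eventually_conj] by blast
  define u where "u = dF g (x + t *s a)"
  have "pair z (br (dF f (a + s *s x)) u) = 0" if z: "z = x \<or> z = a" and s: "cmod s = r" for z s
  proof -
    have "a + s *s x \<in> U"
      using R s unfolding admissible_radius_def by auto
    then have "pair (s *s x + 1 *s a) (br (dF f (a + s *s x)) u) = 0"
      and "pair (1 *s x + t *s a) (br (dF f (a + s *s x)) u) = 0"
      using local_invariant_pair_bracket[OF f(1)] is_weight_pair_bracket[OF w, of "x + t *s a"]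
        weight_orthogonal_dF_local_invariant[OF f(1) _ g w]
      by (simp_all add: add.commute u_def)
    moreover have "s * t \<noteq> 1 * 1"
      using \<open>r * cmod t < 1\<close> s by (metis norm_mult norm_one mult_1 less_irrefl)
    ultimately show ?thesis
      using z pair_eq_0_if_independent_combinations[of s x 1 a _ 1 t] by auto
  qed
  then show ?thesis
    unfolding u_def[symmetric] by (blast intro: admissible_radius_bracket_left_eq_0[OF R])
qed

lemma shifted_semi_invariants_bracket_eq_0:
  assumes g: "semi_invariant br g" and h: "semi_invariant br h"
  shows "pair x (br (dF g (x + t *s a)) (dF h (x + s *s a))) = 0 \<and>
         pair a (br (dF g (x + t *s a)) (dF h (x + s *s a))) = 0"
proof -
  obtain w where w: "is_weight br g w"
    using semi_invariant_has_weight[OF g] by blast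
  obtain w' where w': "is_weight br h w'"
    using semi_invariant_has_weight[OF h] by blast
  define u where "u = dF g (x + t *s a)"
  have rel: "pair (1 *s x + t *s a) (br u (dF h (x + \<sigma> *s a))) = 0 \<and>
             pair (1 *s x + \<sigma> *s a) (br u (dF h (x + \<sigma> *s a))) = 0" for \<sigma>
    using is_weight_pair_bracket[OF w, of "x + t *s a" "dF h (x + \<sigma> *s a)"]
      is_weight_pair_bracket[OF w', of "x + \<sigma> *s a" u]
      weight_orthogonal_dF_semi_invariant[OF g w h] weight_orthogonal_dF_semi_invariant[OF h w' g]
      pair_bracket_antisym[of "x + t *s a" "dF h (x + \<sigma> *s a)" u]
    by (simp add: u_def)
  have rel_ne: "pair x (br u (dF h (x + \<sigma> *s a))) = 0 \<and> pair a (br u (dF h (x + \<sigma> *s a))) = 0"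
    if "\<sigma> \<noteq> t" for \<sigma>
    using rel[of \<sigma>] that by (intro pair_eq_0_if_independent_combinations[of 1 x t a _ 1 \<sigma>]) auto
  txt \<open>The remaining case \<open>\<sigma> = t\<close>: the bracket depends polynomially on \<open>\<sigma>\<close>.\<close>
  obtain c where c: "\<And>\<eta>. pair a (br u \<eta>) = pair c \<eta>"
    using pair_bracket_right_linear by blast
  have "pair c (dF h (x + t *s a)) = 0"
  proof (rule poly_fun_on_line_eq_0[where q = "\<lambda>z. pair c (dF h z)" and S = "- {t}"])
    show "poly_fun (\<lambda>z. pair c (dF h z))"
      using h by (intro poly_fun_pair_dF) (simp add: semi_invariant_def)
    show "infinite (- {t})"
      using infinite_UNIV_char_0 by (simp add: Compl_eq_Diff_UNIV)
    show "pair c (dF h (x + \<sigma> *s a)) = 0" if "\<sigma> \<in> - {t}" for \<sigma>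
      using rel_ne[of \<sigma>] c that by simp
  qed
  then have "pair a (br u (dF h (x + \<sigma> *s a))) = 0" for \<sigma>
    using rel_ne c by (cases "\<sigma> = t") auto
  moreover from this have "pair x (br u (dF h (x + \<sigma> *s a))) = 0" for \<sigma>
    using rel[of t] rel_ne by (cases "\<sigma> = t") (auto simp: pair_add_left pair_smult_left)
  ultimately show ?thesis unfolding u_def by blast
qed

end

lemma gen_alg_differentiable:
  assumes "\<And>P x. P \<in> G \<Longrightarrow> P differentiable (at x)" and "P \<in> gen_alg G"
  shows "P differentiable (at x)"
  using assms(2)
proof (induction arbitrary: x rule: gen_alg.induct)
  case (ga_gen f)
  then show ?case using assms(1) by blast
qed auto

context complex_lie_algebra
begin

lemma gen_alg_bracket_eq_0_left:
  assumes diff: "\<And>P x. P \<in> G \<Longrightarrow> P differentiable (at x)"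
    and gen: "\<And>P x. P \<in> G \<Longrightarrow> pair (z x) (br (dF P x) (dF Q x)) = 0"
    and "P \<in> gen_alg G"
  shows "pair (z x) (br (dF P x) (dF Q x)) = 0"
  using \<open>P \<in> gen_alg G\<close>
proof (induction arbitrary: x rule: gen_alg.induct)
  case (ga_gen f)
  then show ?case by (rule gen)
next
  case (ga_const c)
  then show ?case by (simp add: dF_const)
next
  case (ga_add f g)
  then show ?case
    by (simp add: dF_add gen_alg_differentiable[OF diff] bracket_add_left pair_add_right)
next
  case (ga_mult f g)
  then show ?case
    by (simp add: dF_mult gen_alg_differentiable[OF diff] bracket_add_left bracket_smult_left
        pair_add_right pair_smult_right)
qed

lemma gen_alg_bracket_eq_0:
  assumes diff: "\<And>P x. P \<in> G \<Longrightarrow> P differentiable (at x)"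
    and gen: "\<And>P Q x. P \<in> G \<Longrightarrow> Q \<in> G \<Longrightarrow> pair (z x) (br (dF P x) (dF Q x)) = 0"
    and P: "P \<in> gen_alg G" and Q: "Q \<in> gen_alg G"
  shows "pair (z x) (br (dF P x) (dF Q x)) = 0"
proof -
  have "pair (z x) (br (dF R x) (dF P x)) = 0" if "R \<in> G" for R x
  proof -
    have "pair (z x) (br (dF P x) (dF R x)) = 0"
      by (rule gen_alg_bracket_eq_0_left[OF diff gen[OF _ that] P])
    then show ?thesis
      by (simp add: pair_bracket_antisym[of _ "dF R x"])
  qed
  then have "pair (z x) (br (dF Q x) (dF P x)) = 0"
    using gen_alg_bracket_eq_0_left[OF diff _ Q] by blast
  then show ?thesis
    by (simp add: pair_bracket_antisym[of _ "dF P x"])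
qed

end

definition shift_si_generators ::
    "(complex^'n \<Rightarrow> complex^'n \<Rightarrow> complex^'n) \<Rightarrow> (nat \<Rightarrow> complex^'n \<Rightarrow> complex) \<Rightarrow> nat \<Rightarrow>
      complex^'n \<Rightarrow> (complex^'n \<Rightarrow> complex) set" where
  "shift_si_generators br f m a = {shift_coeff (f i) a j | i j. i < m \<and> j > 0} \<union>
      {(\<lambda>x. g (x + t *s a)) | g t. semi_invariant br g}"

lemma shifts_si_alg_eq_gen_alg: "shifts_si_alg br f m a = gen_alg (shift_si_generators br f m a)"
  unfolding shifts_si_alg_def shift_si_generators_def ..

lemma shift_si_generatorsE:
  assumes "P \<in> shift_si_generators br f m a"
  obtains (shift) i j where "i < m" "P = shift_coeff (f i) a j"
  | (semi) g t where "P = (\<lambda>x. g (x + t *s a))" "semi_invariant br g"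
  using assms unfolding shift_si_generators_def by blast

lemma shift_si_generators_differentiable:
  assumes "P \<in> shift_si_generators br f m a"
    and f: "\<And>i. i < m \<Longrightarrow> \<exists>U. a \<in> U \<and> local_invariant br (f i) U"
  shows "P differentiable (at x)"
  using assms(1)
proof (cases rule: shift_si_generatorsE)
  case (shift i j)
  then show ?thesis
    using f[of i] shift_coeff_differentiable unfolding local_invariant_def by blast
next
  case (semi g t)
  then show ?thesis
    using poly_fun_has_derivative[OF poly_fun_shift] unfolding differentiable_def semi_invariant_def
    by blast
qed

lemma (in complex_lie_algebra) shift_si_generators_bracket_eq_0:
  assumes P: "P \<in> shift_si_generators br f m a" and Q: "Q \<in> shift_si_generators br f m a"
    and f: "\<And>i. i < m \<Longrightarrow> \<exists>U. a \<in> U \<and> local_invariant br (f i) U"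
  shows "pair x (br (dF P x) (dF Q x)) = 0 \<and> pair a (br (dF P x) (dF Q x)) = 0"
proof -
  have dF_semi: "dF (\<lambda>x. g (x + t *s a)) x = dF g (x + t *s a)" if "semi_invariant br g" for g t
    using dF_poly_fun_shift that unfolding semi_invariant_def by blast
  have swap: "pair x (br (dF P x) (dF Q x)) = 0 \<and> pair a (br (dF P x) (dF Q x)) = 0"
    if "pair x (br (dF Q x) (dF P x)) = 0 \<and> pair a (br (dF Q x) (dF P x)) = 0"
    using that by (simp add: pair_bracket_antisym[of _ "dF P x"])
  from P show ?thesis
  proof (cases rule: shift_si_generatorsE)
    case P_shift: (shift i j)
    obtain U where U: "local_invariant br (f i) U" "a \<in> U" using f[OF P_shift(1)] by blast
    from Q show ?thesis
    proof (cases rule: shift_si_generatorsE)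
      case (shift i' j')
      obtain U' where "local_invariant br (f i') U'" "a \<in> U'" using f[OF shift(1)] by blast
      then show ?thesis using P_shift shift shift_coeffs_bracket_eq_0[OF U] by simp
    next
      case (semi g t)
      then show ?thesis
        using P_shift shift_coeff_shifted_semi_invariant_bracket_eq_0[OF U] dF_semi by simp
    qed
  next
    case P_semi: (semi g t)
    from Q show ?thesis
    proof (cases rule: shift_si_generatorsE)
      case (shift i j)
      obtain U where U: "local_invariant br (f i) U" "a \<in> U" using f[OF shift(1)] by blast
      then show ?thesis
        using P_semi shift shift_coeff_shifted_semi_invariant_bracket_eq_0[OF U] dF_semi swap by simp
    next
      case (semi g' t')
      then show ?thesis
        using P_semi shifted_semi_invariants_bracket_eq_0 dF_semi by simp
    qed
  qed
qed

theorem mainTheorem4: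
  fixes br :: "complex^'n \<Rightarrow> complex^'n \<Rightarrow> complex^'n"
    and a :: "complex^'n"
    and f :: "nat \<Rightarrow> complex^'n \<Rightarrow> complex"
    and m :: nat
  assumes "lie_algebra br"
    and "regular br a"
    and "m = lie_index br"
    and "\<And>i. i < m \<Longrightarrow> \<exists>U. a \<in> U \<and> local_invariant br (f i) U"
    and "inj_on (\<lambda>i. dF (f i) a) {..<m}"
    and "vec.independent ((\<lambda>i. dF (f i) a) ` {..<m})"
    and "vec.span ((\<lambda>i. dF (f i) a) ` {..<m}) = stab br a"
  shows "\<forall>P\<in>shifts_si_alg br f m a. \<forall>Q\<in>shifts_si_alg br f m a.
           (\<forall>x. lie_poisson br P Q x = 0) \<and> (\<forall>x. frozen_bracket br a P Q x = 0)"
proof -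
  interpret complex_lie_algebra br
    by unfold_locales (rule assms(1))
  let ?G = "shift_si_generators br f m a"
  have diff: "\<And>P x. P \<in> ?G \<Longrightarrow> P differentiable (at x)"
    using shift_si_generators_differentiable assms(4) by blast
  have gen_x: "\<And>P Q x. P \<in> ?G \<Longrightarrow> Q \<in> ?G \<Longrightarrow> pair x (br (dF P x) (dF Q x)) = 0"
    and gen_a: "\<And>P Q x. P \<in> ?G \<Longrightarrow> Q \<in> ?G \<Longrightarrow> pair a (br (dF P x) (dF Q x)) = 0"
    using shift_si_generators_bracket_eq_0[where f = f and m = m and a = a, OF _ _ assms(4)] by blast+
  show ?thesis
    unfolding shifts_si_alg_eq_gen_alg lie_poisson_def frozen_bracket_def
    using gen_alg_bracket_eq_0[OF diff gen_x] gen_alg_bracket_eq_0[OF diff gen_a] by blast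
qed

end
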